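(* Let ${\bf r}=(r_0,r_1,\dots)$ be a finitely supported sequence of nonnegative integers with $n=\sum_{d\ge1}r_d\ge1$, $\ell=-\sum_{d\ge0}(d-1)r_d\ge1$. Then the polynomial identity $$\sum_{F\in\mathscr F({\bf r})}\prod_{v\in I(F)}\frac{((d_v-1)h_v+1)x+1-h_v}{d_vh_v}=\frac{\ell}{r_0}\cdot\frac{(r_0x)(r_0x-1)\cdots(r_0x-n+1)}{r_1!\,r_2!\cdots}$$ holds if and only if the polynomial identity $$\sum_{F\in\mathscr F({\bf r})}\prod_{v\in I(F)}\frac{(d_v+x)h_v-x}{d_vh_v}=\frac{\ell}{r_1!\,r_2!\cdots}\prod_{i=1}^{n-1}\big(r_0+i(1+x)\big)$$ holds.
   Context: A plane tree is an unlabelled rooted tree in which the children of every vertex are linearly ordered; a plane forest is a finite linearly ordered sequence of plane trees. For vertices $u,v$ in a tree, $v$ is a descendant of $u$ if $u$ lies on the path from the root to $v$ (so $u$ is a descendant of itself). The degree $d_v$ is the number of children of $v$; $v$ is internal if $d_v\ge1$. $I(F)$ is the set of internal vertices of $F$. The hook length $h_v$ of an internal vertex $v$ is the number of internal vertices among the descendants of $v$ (including $v$). A plane forest has type ${\bf r}$ if it has exactly $r_i$ vertices of degree $i$ for all $i\ge0$; $\mathscr F({\bf r})$ is the set of such forests. *)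

theory Defs
  imports "HOL-Computational_Algebra.Polynomial" "HOL-Library.Multiset"
begin

datatype ptree = Node "ptree list"

primrec degs :: "ptree \<Rightarrow> nat multiset" where
  "degs (Node ts) = {#length ts#} + sum_list (map degs ts)"

text \<open>Multiset of pairs (d_v, h_v) over the internal vertices v of a tree,
  where d_v is the degree and h_v the hook length (number of internal
  descendants of v, including v).  Note that the number of internal vertices
  of the subtree rooted at v is the size of this multiset for that subtree.\<close>
primrec ivs :: "ptree \<Rightarrow> (nat \<times> nat) multiset" where
  "ivs (Node ts) =
     (if ts = [] then {#} else {#(length ts, 1 + sum_list (map (size \<circ> ivs) ts))#})
     + sum_list (map ivs ts)"

definition forest_degs :: "ptree list \<Rightarrow> nat multiset" where
  "forest_degs F = sum_list (map degs F)"

definition forest_ivs :: "ptree list \<Rightarrow> (nat \<times> nat) multiset" where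
  "forest_ivs F = sum_list (map ivs F)"

definition forests_of_type :: "(nat \<Rightarrow> nat) \<Rightarrow> ptree list set" where
  "forests_of_type r = {F. \<forall>i. count (forest_degs F) i = r i}"

end

theory Submission imports Defs begin

text \<open>Both identities are the same statement under the substitution \<open>x \<mapsto> -1 - 1/x\<close>, a bijection
  from the nonzero reals onto the reals other than \<open>-1\<close>.  Every forest of type \<open>r\<close> has exactly
  \<open>n\<close> internal vertices, and the substitution multiplies each vertex factor of the second
  identity, as well as each of the \<open>n\<close> factors of its right-hand side, by \<open>1/x\<close>; so evaluating
  the second identity at \<open>-1 - 1/x\<close> and multiplying by \<open>x\<^sup>n\<close> gives the first identity at \<open>x\<close>.
  Two polynomials agreeing at all but finitely many points are equal.\<close>

lemma size_sum_list_map: "size (sum_list (map f xs)) = (\<Sum>x\<leftarrow>xs. size (f x :: 'a multiset))"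
  by (induction xs) auto

lemma size_ivs: "size (ivs t) = size (filter_mset (\<lambda>d. 0 < d) (degs t))"
proof (induction t)
  case (Node ts)
  then have "sum_list (map (size \<circ> ivs) ts) = sum_list (map (\<lambda>t. size (filter_mset (\<lambda>d. 0 < d) (degs t))) ts)"
    by (induction ts) auto
  then show ?case
    by (simp add: filter_mset_sum_list size_sum_list_map o_def)
qed

lemma size_forest_ivs: "size (forest_ivs F) = size (filter_mset (\<lambda>d. 0 < d) (forest_degs F))"
  unfolding forest_ivs_def forest_degs_def
  by (simp add: filter_mset_sum_list size_sum_list_map size_ivs o_def)

lemma size_forest_ivs_of_type:
  assumes "F \<in> forests_of_type r"
  shows "size (forest_ivs F) = (\<Sum>d\<in>{i. 1 \<le> i \<and> r i \<noteq> 0}. r d)"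
proof -
  let ?M = "filter_mset (\<lambda>d. 0 < d) (forest_degs F)"
  have count: "count (forest_degs F) = r"
    using assms by (auto simp: forests_of_type_def)
  have "set_mset ?M = {i. 1 \<le> i \<and> r i \<noteq> 0}"
    by (auto simp: count Suc_le_eq simp flip: count_greater_zero_iff)
  then have "size ?M = (\<Sum>d\<in>{i. 1 \<le> i \<and> r i \<noteq> 0}. count ?M d)"
    by (metis size_multiset_overloaded_eq)
  also have "\<dots> = (\<Sum>d\<in>{i. 1 \<le> i \<and> r i \<noteq> 0}. r d)"
    by (rule sum.cong) (auto simp: count)
  finally show ?thesis
    by (simp add: size_forest_ivs)
qed

lemma prod_mset_mult_const: "(\<Prod>a\<in>#M. c * f a) = c ^ size M * (\<Prod>a\<in>#M. f a)"
  for c :: "'b :: comm_monoid_mult"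
  by (induction M) (auto simp: algebra_simps)

lemma poly_eqI_cofinite:
  fixes p q :: "'a :: {idom, ring_char_0} poly"
  assumes "finite S" and "\<And>x. x \<notin> S \<Longrightarrow> poly p x = poly q x"
  shows "p = q"
proof -
  have "- S \<subseteq> {x. poly (p - q) x = 0}"
    using assms(2) by auto
  moreover have "infinite (- S)"
    using assms(1) by (simp add: Compl_eq_Diff_UNIV infinite_UNIV_char_0 Diff_infinite_finite)
  ultimately have "infinite {x. poly (p - q) x = 0}"
    using finite_subset by blast
  then have "p - q = 0"
    using poly_roots_finite by blast
  then show ?thesis
    by simp
qed

lemma poly_eq_iff_substituted:
  fixes p p' q q' :: "real poly"
  assumes "\<And>x. x \<noteq> 0 \<Longrightarrow> poly p x = x ^ n * poly q (- 1 - 1 / x)"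
    and "\<And>x. x \<noteq> 0 \<Longrightarrow> poly p' x = x ^ n * poly q' (- 1 - 1 / x)"
  shows "p = p' \<longleftrightarrow> q = q'"
proof
  assume "p = p'"
  show "q = q'"
  proof (rule poly_eqI_cofinite[of "{-1}"])
    fix y :: real
    assume "y \<notin> {-1}"
    then have "y + 1 \<noteq> 0" by auto
    define x where "x = - 1 / (y + 1)"
    have "x \<noteq> 0" and "- 1 - 1 / x = y"
      using \<open>y + 1 \<noteq> 0\<close> by (auto simp: x_def)
    then have "x ^ n * poly q y = x ^ n * poly q' y"
      using assms[of x] \<open>p = p'\<close> by simp
    with \<open>x \<noteq> 0\<close> show "poly q y = poly q' y"
      by simp
  qed simp
next
  assume "q = q'"
  then show "p = p'"
    by (intro poly_eqI_cofinite[of "{0}"]) (auto simp: assms)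
qed

lemma poly_vertex_weights_substituted:
  fixes M :: "(nat \<times> nat) multiset" and x :: real
  assumes "x \<noteq> 0"
  shows "poly (\<Prod>(d, h)\<in>#M. smult (1 / (real d * real h)) [: 1 - real h, (real d - 1) * real h + 1 :]) x
       = x ^ size M * poly (\<Prod>(d, h)\<in>#M. smult (1 / (real d * real h)) [: real d * real h, real h - 1 :])
                           (- 1 - 1 / x)"
proof -
  have "poly (smult (1 / (real d * real h)) [: 1 - real h, (real d - 1) * real h + 1 :]) x
      = x * poly (smult (1 / (real d * real h)) [: real d * real h, real h - 1 :]) (- 1 - 1 / x)"
    for d h
    using assms by (simp add: field_simps)
  then show ?thesis
    by (simp add: poly_prod_mset image_mset.compositionality o_def case_prod_beta
        flip: prod_mset_mult_const)
qed

lemma poly_falling_product_substituted: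
  fixes c x :: real
  assumes "n \<ge> 1" and "x \<noteq> 0"
  shows "poly (\<Prod>k<n. [: - real k, c :]) x = c * x ^ n * poly (\<Prod>i\<in>{1..<n}. [: c + real i, real i :]) (- 1 - 1 / x)"
proof -
  have "(\<Prod>i\<in>{1..<n}. c * x - real i) = (\<Prod>i\<in>{1..<n}. x * (c + real i + real i * (- 1 - 1 / x)))"
    using assms(2) by (intro prod.cong) (simp_all add: field_simps)
  moreover have "{..<n} = insert 0 {1..<n}"
    using assms(1) by auto
  ultimately have "(\<Prod>k<n. c * x - real k) = c * x * (\<Prod>i\<in>{1..<n}. x * (c + real i + real i * (- 1 - 1 / x)))"
    by simp
  also have "\<dots> = c * x ^ n * (\<Prod>i\<in>{1..<n}. c + real i + real i * (- 1 - 1 / x))"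
    using assms(1) by (simp add: prod.distrib power_eq_if)
  finally show ?thesis
    by (simp add: poly_prod mult_ac)
qed

lemma poly_forest_sum_substituted:
  fixes x :: real
  assumes "\<And>F. F \<in> A \<Longrightarrow> size (forest_ivs F) = n" and "x \<noteq> 0"
  shows "poly (\<Sum>F\<in>A. \<Prod>(d, h)\<in>#forest_ivs F.
             smult (1 / (real d * real h)) [: 1 - real h, (real d - 1) * real h + 1 :]) x
       = x ^ n * poly (\<Sum>F\<in>A. \<Prod>(d, h)\<in>#forest_ivs F.
             smult (1 / (real d * real h)) [: real d * real h, real h - 1 :]) (- 1 - 1 / x)"
  unfolding poly_sum sum_distrib_left
  by (rule sum.cong) (simp_all only: poly_vertex_weights_substituted[OF assms(2)] assms(1))

lemma leaf_count_nonzero: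
  fixes r :: "nat \<Rightarrow> nat"
  assumes "- (\<Sum>d\<in>{i. r i \<noteq> 0}. (int d - 1) * int (r d)) \<ge> 1"
  shows "r 0 \<noteq> 0"
proof
  assume "r 0 = 0"
  then have "(int d - 1) * int (r d) \<ge> 0" if "r d \<noteq> 0" for d
    using that by (cases d) auto
  then have "(\<Sum>d\<in>{i. r i \<noteq> 0}. (int d - 1) * int (r d)) \<ge> 0"
    by (intro sum_nonneg) simp
  with assms show False by simp
qed

theorem lemma3p2:
  fixes r :: "nat \<Rightarrow> nat" and n :: nat and l :: int
  assumes fin: "finite {i. r i \<noteq> 0}"
    and n_def: "n = (\<Sum>d\<in>{i. 1 \<le> i \<and> r i \<noteq> 0}. r d)"
    and l_def: "l = - (\<Sum>d\<in>{i. r i \<noteq> 0}. (int d - 1) * int (r d))"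
    and n_pos: "n \<ge> 1" and l_pos: "l \<ge> 1"
  shows
   "((\<Sum>F\<in>forests_of_type r.
        \<Prod>(d, h)\<in>#forest_ivs F.
          smult (1 / (real d * real h))
            [: 1 - real h, (real d - 1) * real h + 1 :])
     = smult (real_of_int l / real (r 0)
              / real (\<Prod>d\<in>{i. 1 \<le> i \<and> r i \<noteq> 0}. fact (r d)))
         (\<Prod>k<n. [: - real k, real (r 0) :]))
   \<longleftrightarrow>
    ((\<Sum>F\<in>forests_of_type r.
        \<Prod>(d, h)\<in>#forest_ivs F.
          smult (1 / (real d * real h))
            [: real d * real h, real h - 1 :])
     = smult (real_of_int l
              / real (\<Prod>d\<in>{i. 1 \<le> i \<and> r i \<noteq> 0}. fact (r d)))
         (\<Prod>i\<in>{1..<n}. [: real (r 0) + real i, real i :]))"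
proof -
  have sizes: "size (forest_ivs F) = n" if "F \<in> forests_of_type r" for F
    using size_forest_ivs_of_type[OF that] n_def by simp
  have "r 0 \<noteq> 0"
    using leaf_count_nonzero l_def l_pos by blast
  then have rhs: "poly (smult (real_of_int l / real (r 0) / real (\<Prod>d\<in>{i. 1 \<le> i \<and> r i \<noteq> 0}. fact (r d)))
                  (\<Prod>k<n. [: - real k, real (r 0) :])) x
      = x ^ n * poly (smult (real_of_int l / real (\<Prod>d\<in>{i. 1 \<le> i \<and> r i \<noteq> 0}. fact (r d)))
                  (\<Prod>i\<in>{1..<n}. [: real (r 0) + real i, real i :])) (- 1 - 1 / x)"
    if "x \<noteq> 0" for x
    by (simp add: poly_falling_product_substituted[OF n_pos that])
  show ?thesis
    by (rule poly_eq_iff_substituted[OF poly_forest_sum_substituted[OF sizes] rhs])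
qed

end
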